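(* Let $u,v$ be weights on $\mathbb D$ and $\mathcal D$ a dyadic grid on $\mathbb T$. If there exist $C>0$ and $0<s<1$ such that $\langle u\rangle_{v,Q_I}\le C\langle u\rangle_{s,v,Q_I}$ for all $I\in\mathcal D$, then $u\in\mathrm{B}_\infty(\mathcal D,v)$.
   Context: $\mathbb D$ is the open unit disc, $\mathbb T$ the unit circle, $dA$ normalized area measure. A weight is a locally integrable, a.e. positive function. For measurable $f$, $0<p<\infty$, weight $v$, measurable $E$: $\langle f\rangle_{p,v,E}=\big(\int_E|f|^pv\,dA\big)^{1/p}/\big(\int_Ev\,dA\big)^{1/p}$, $\langle f\rangle_{v,E}=\langle f\rangle_{1,v,E}$. For an arc $I\subset\mathbb T$ with center $e^{i\theta_0}$ and normalized arclength $\ell(I)$ ($\ell(\mathbb T)=1$), $Q_I=\{re^{i\theta}\in\mathbb D:1-r\le\ell(I),|\theta-\theta_0|\le\ell(I)/2\}$ and $T_I=\{re^{i\theta}\in\mathbb D:\ell(I)/2\le1-r\le\ell(I),|\theta-\theta_0|\le\ell(I)/2\}$. A dyadic grid $\mathcal D$ is a collection of arcs of $\mathbb T$ such that: for each $k\in\mathbb N$, $\{I\in\mathcal D:\ell(I)=2^{-k}\}$ partitions $\mathbb T$; $\{T_I:I\in\mathcal D\}$ partitions $\mathbb D$; any two arcs of $\mathcal D$ are disjoint or nested; each $I\in\mathcal D$ is the union of $2^k$ arcs of $\mathcal D$ of length $2^{-k}\ell(I)$. The dyadic weighted maximal operator is $M_v^{\mathcal D}f(z)=\sup_{I\in\mathcal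 D:z\in Q_I}\langle f\rangle_{v,Q_I}$. A weight $u$ belongs to $\mathrm{B}_\infty(\mathcal D,v)$ if $[u]_{\mathrm{B}_\infty(\mathcal D,v)}=\sup_{I\in\mathcal D}\langle M_v^{\mathcal D}(u\chi_{Q_I})\rangle_{v,Q_I}/\langle u\rangle_{v,Q_I}<\infty$. *)

theory Defs
  imports "HOL-Analysis.Analysis"
begin

text \<open>An arc of the unit circle is represented by a pair (c, l): its centre e^{2 pi i c}
  (angle c measured in full turns) and its normalized arclength l, 0 < l <= 1.
  Arcs are taken half-open so that partitions are exact.\<close>
type_synonym arc = "real \<times> real"

definition arc_set :: "arc \<Rightarrow> complex set" where
  "arc_set I = {cis (2 * pi * \<theta>) | \<theta>. fst I - snd I / 2 \<le> \<theta> \<and> \<theta> < fst I + snd I / 2}"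

definition arclen :: "arc \<Rightarrow> real" where
  "arclen I = snd I"

definition Qbox :: "arc \<Rightarrow> complex set" where
  "Qbox I = {z. norm z < 1 \<and> 1 - norm z \<le> arclen I \<and>
     (\<exists>\<theta>. z = complex_of_real (norm z) * cis (2 * pi * \<theta>) \<and> \<bar>\<theta> - fst I\<bar> \<le> arclen I / 2)}"

text \<open>The top half T_I (half-open version, so that the T_I can partition the disc).\<close>
definition Tbox :: "arc \<Rightarrow> complex set" where
  "Tbox I = {z. norm z < 1 \<and> arclen I / 2 < 1 - norm z \<and> 1 - norm z \<le> arclen I \<and>
     (\<exists>\<theta>. z = complex_of_real (norm z) * cis (2 * pi * \<theta>) \<and>
          fst I - arclen I / 2 \<le> \<theta> \<and> \<theta> < fst I + arclen I / 2)}"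

definition dyadic_grid :: "arc set \<Rightarrow> bool" where
  "dyadic_grid D \<longleftrightarrow>
     (\<forall>I\<in>D. 0 < arclen I \<and> arclen I \<le> 1) \<and>
     (\<forall>k::nat.
        (\<forall>I\<in>D. \<forall>J\<in>D. arclen I = (1/2)^k \<and> arclen J = (1/2)^k \<and> I \<noteq> J \<longrightarrow>
            arc_set I \<inter> arc_set J = {}) \<and>
        \<Union>{arc_set I | I. I \<in> D \<and> arclen I = (1/2)^k} = sphere 0 1) \<and>
     (\<forall>I\<in>D. \<forall>J\<in>D. I \<noteq> J \<longrightarrow> Tbox I \<inter> Tbox J = {}) \<and>
     \<Union>(Tbox ` D) = ball 0 1 \<and>
     (\<forall>I\<in>D. \<forall>J\<in>D. arc_set I \<inter> arc_set J = {} \<or> arc_set I \<subseteq> arc_set J \<or> arc_set J \<subseteq> arc_set I) \<and>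
     (\<forall>I\<in>D. \<forall>k::nat. \<exists>S\<subseteq>D. card S = 2^k \<and> (\<forall>J\<in>S. arclen J = arclen I / 2^k) \<and>
          arc_set I = \<Union>(arc_set ` S))"

definition weight :: "(complex \<Rightarrow> real) \<Rightarrow> bool" where
  "weight w \<longleftrightarrow> w \<in> borel_measurable lebesgue \<and>
     (\<forall>K. compact K \<and> K \<subseteq> ball 0 1 \<longrightarrow> set_integrable lebesgue K w) \<and>
     (AE z in lebesgue. z \<in> ball 0 1 \<longrightarrow> 0 < w z)"

text \<open>Integral over E with respect to normalized area measure dA = dx dy / pi.\<close>
definition areaint :: "complex set \<Rightarrow> (complex \<Rightarrow> ennreal) \<Rightarrow> ennreal" where
  "areaint E g = ennreal (1 / pi) * (\<integral>\<^sup>+ z. g z * indicator E z \<partial>lebesgue)"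

definition epow :: "ennreal \<Rightarrow> real \<Rightarrow> ennreal" where
  "epow x q = (if x = \<infinity> then \<infinity> else ennreal (enn2real x powr q))"

definition avgp :: "real \<Rightarrow> (complex \<Rightarrow> real) \<Rightarrow> complex set \<Rightarrow> (complex \<Rightarrow> real) \<Rightarrow> ennreal" where
  "avgp p v E f = epow (areaint E (\<lambda>z. ennreal (\<bar>f z\<bar> powr p * v z))) (1 / p) /
                  epow (areaint E (\<lambda>z. ennreal (v z))) (1 / p)"

text \<open><g>_{v,E} for a [0,infinity]-valued function (used for the maximal function);
  for real f, avgp 1 v E f agrees with wavg v E (|f|).\<close>
definition wavg :: "(complex \<Rightarrow> real) \<Rightarrow> complex set \<Rightarrow> (complex \<Rightarrow> ennreal) \<Rightarrow> ennreal" where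
  "wavg v E g = areaint E (\<lambda>z. g z * ennreal (v z)) / areaint E (\<lambda>z. ennreal (v z))"

definition dyadic_max :: "arc set \<Rightarrow> (complex \<Rightarrow> real) \<Rightarrow> (complex \<Rightarrow> real) \<Rightarrow> complex \<Rightarrow> ennreal" where
  "dyadic_max D v f z = (SUP I \<in> {I \<in> D. z \<in> Qbox I}. avgp 1 v (Qbox I) f)"

definition Binf_const :: "arc set \<Rightarrow> (complex \<Rightarrow> real) \<Rightarrow> (complex \<Rightarrow> real) \<Rightarrow> ennreal" where
  "Binf_const D v u = (SUP I \<in> D.
      wavg v (Qbox I) (dyadic_max D v (\<lambda>z. u z * indicator (Qbox I) z)) / avgp 1 v (Qbox I) u)"

definition in_Binf :: "(complex \<Rightarrow> real) \<Rightarrow> arc set \<Rightarrow> (complex \<Rightarrow> real) \<Rightarrow> bool" where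
  "in_Binf u D v \<longleftrightarrow> Binf_const D v u < \<infinity>"

end

theory Submission
  imports Defs
begin

text \<open>Fix I in D, let Q = Q_I, let M be the measure v dA on Q, and for a dyadic box B inside
  Q let a_B be the v-average of |u| over B. Applying Young's inequality pointwise to
  (|u|/a_B)^s, the reverse Hoelder hypothesis on B shows that |u| exceeds \<epsilon> a_B on a fixed
  proportion of B: M B \<le> c M (B \<inter> {|u| > \<epsilon> a_B}), with c and \<epsilon> depending only on C and s.
  Dyadic boxes are nested or meet in a null set, so the union of the boxes with a_B > \<lambda> has
  measure at most c M {|u| > \<epsilon> \<lambda>}. Summing over the levels \<lambda> = A 2^-k, where A is the
  largest a_B, bounds the integral of sup_B a_B \<chi>_B over Q by 2 c / \<epsilon> times the integral
  of |u|, first for finitely many boxes and then, by monotone convergence, for all of the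
  countably many. Finally, on Q the dyadic maximal function of u \<chi>_Q is at most
  sup_B a_B \<chi>_B, since the boxes containing Q have averages at most a_Q and all other boxes
  meet Q in a null set. So the B_\<infinity> quotient of every box Q_I is at most 2 c / \<epsilon>.\<close>

section \<open>Carleson boxes of a dyadic grid\<close>

lemma cis_2pi_eq_iff: "cis (2*pi*x) = cis (2*pi*y) \<longleftrightarrow> (\<exists>n::int. x = y + n)"
proof -
  have "cis (2*pi*x) = cis (2*pi*y) \<longleftrightarrow> sin (2*pi*x) = sin (2*pi*y) \<and> cos (2*pi*x) = cos (2*pi*y)"
    by (auto simp: complex_eq_iff)
  also have "\<dots> \<longleftrightarrow> (\<exists>n::int. 2*pi*x = 2*pi*y + 2*pi*n)" by (rule sin_cos_eq_iff)
  also have "\<dots> \<longleftrightarrow> (\<exists>n::int. x = y + n)"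
    by (simp add: distrib_left[symmetric])
  finally show ?thesis .
qed

lemma cis_2pi_diff_of_int: "cis (2*pi*(x - of_int n)) = cis (2*pi*x)"
  by (subst cis_2pi_eq_iff) (auto intro: exI[of _ "-n"])

lemma polar_angle_in_window:
  "\<exists>\<theta>. z = complex_of_real (cmod z) * cis (2*pi*\<theta>) \<and> c - 1/2 \<le> \<theta> \<and> \<theta> < c + 1/2"
proof -
  define x where "x = Arg z / (2*pi)"
  have zx: "z = complex_of_real (cmod z) * cis (2*pi*x)"
    using rcis_cmod_Arg[of z] by (simp add: x_def rcis_def)
  define \<theta> where "\<theta> = x - of_int \<lfloor>x - c + 1/2\<rfloor>"
  have "z = complex_of_real (cmod z) * cis (2*pi*\<theta>)"
    using zx by (simp add: \<theta>_def cis_2pi_diff_of_int)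
  moreover have "c - 1/2 \<le> \<theta> \<and> \<theta> < c + 1/2"
    unfolding \<theta>_def
    using of_int_floor_le[of "x - c + 1/2"] real_of_int_floor_add_one_gt[of "x - c + 1/2"]
    by linarith
  ultimately show ?thesis by blast
qed

lemma arc_setI: "fst I - snd I/2 \<le> \<theta> \<Longrightarrow> \<theta> < fst I + snd I/2 \<Longrightarrow> cis (2*pi*\<theta>) \<in> arc_set I"
  unfolding arc_set_def by blast

lemma arc_setE:
  "w \<in> arc_set I \<Longrightarrow> (\<And>\<theta>. w = cis (2*pi*\<theta>) \<Longrightarrow> fst I - snd I/2 \<le> \<theta> \<Longrightarrow> \<theta> < fst I + snd I/2 \<Longrightarrow> P) \<Longrightarrow> P"
  unfolding arc_set_def by blast

lemma QboxI:
  "cmod z < 1 \<Longrightarrow> 1 - cmod z \<le> snd I \<Longrightarrow> z = complex_of_real (cmod z) * cis (2*pi*\<theta>) \<Longrightarrow>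
   \<bar>\<theta> - fst I\<bar> \<le> snd I / 2 \<Longrightarrow> z \<in> Qbox I"
  unfolding Qbox_def arclen_def by blast

lemma QboxE:
  "z \<in> Qbox I \<Longrightarrow> (\<And>\<theta>. cmod z < 1 \<Longrightarrow> 1 - cmod z \<le> snd I \<Longrightarrow>
     z = complex_of_real (cmod z) * cis (2*pi*\<theta>) \<Longrightarrow> \<bar>\<theta> - fst I\<bar> \<le> snd I / 2 \<Longrightarrow> P) \<Longrightarrow> P"
  unfolding Qbox_def arclen_def by blast

lemma TboxI:
  "cmod z < 1 \<Longrightarrow> snd I / 2 < 1 - cmod z \<Longrightarrow> 1 - cmod z \<le> snd I \<Longrightarrow>
   z = complex_of_real (cmod z) * cis (2*pi*\<theta>) \<Longrightarrow>
   fst I - snd I / 2 \<le> \<theta> \<Longrightarrow> \<theta> < fst I + snd I / 2 \<Longrightarrow> z \<in> Tbox I"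
  unfolding Tbox_def arclen_def by blast

lemma Qbox_subset_ball: "Qbox I \<subseteq> ball 0 1"
  by (auto elim: QboxE)

lemma Qbox_eq_ball: "snd I = 1 \<Longrightarrow> Qbox I = ball 0 1"
proof (intro equalityI subsetI Qbox_subset_ball[THEN subsetD])
  fix z :: complex assume I: "snd I = 1" and z: "z \<in> ball 0 1"
  obtain \<theta> where \<theta>: "z = complex_of_real (cmod z) * cis (2*pi*\<theta>)" "fst I - 1/2 \<le> \<theta>" "\<theta> < fst I + 1/2"
    using polar_angle_in_window by blast
  then have "\<bar>\<theta> - fst I\<bar> \<le> 1/2" unfolding abs_le_iff by linarith
  then show "z \<in> Qbox I" using I z \<theta>(1) by (intro QboxI[of z I \<theta>]) auto
qed

lemma arc_set_subset_imp_shifted_interval: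
  assumes sub: "arc_set J \<subseteq> arc_set I" and J: "0 < snd J" and I: "snd I < 1"
  shows "\<exists>n::int. fst I - snd I/2 + n \<le> fst J - snd J/2 \<and> fst J + snd J/2 \<le> fst I + snd I/2 + n"
proof -
  define a b where "a = fst J - snd J/2" "b = fst I - snd I/2"
  have lift: "\<exists>y n. b \<le> y \<and> y < b + snd I \<and> x = y + of_int n" if "a \<le> x" "x < a + snd J" for x
  proof -
    have "cis (2*pi*x) \<in> arc_set I"
      using sub that by (intro subsetD[OF sub] arc_setI) (auto simp: a_b_def)
    then obtain y where "cis (2*pi*x) = cis (2*pi*y)" "b \<le> y" "y < b + snd I"
      by (auto simp: a_b_def elim!: arc_setE)
    then show ?thesis using cis_2pi_eq_iff by blast
  qed
  obtain y0 n where y0: "b \<le> y0" "y0 < b + snd I" "a = y0 + of_int n"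
    using lift[of a] J by auto
  have "a + snd J \<le> b + snd I + n"
  proof (rule ccontr)
    assume "\<not> ?thesis"
    moreover have "a \<le> b + snd I + n" using y0 by simp
    ultimately obtain y m where "b \<le> y" "y < b + snd I" "b + snd I + n = y + of_int m"
      using lift by fastforce
    then have "- 1 < real_of_int (n - m)" "real_of_int (n - m) < 0" using I by auto
    then have "- 1 < n - m" "n - m < 0" by linarith+
    then show False by linarith
  qed
  then show ?thesis using y0 by (intro exI[of _ n]) (auto simp: a_b_def)
qed

lemma Qbox_mono:
  assumes I: "snd I \<le> 1" and J: "0 < snd J" and sub: "arc_set J \<subseteq> arc_set I"
  shows "Qbox J \<subseteq> Qbox I"
proof (cases "snd I = 1")
  case True
  then show ?thesis using Qbox_eq_ball Qbox_subset_ball by blast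
next
  case False
  then obtain n :: int where n: "fst I - snd I/2 + n \<le> fst J - snd J/2" "fst J + snd J/2 \<le> fst I + snd I/2 + n"
    using arc_set_subset_imp_shifted_interval[OF sub J] I by fastforce
  show ?thesis
  proof
    fix z assume "z \<in> Qbox J"
    then obtain \<theta> where z: "cmod z < 1" "1 - cmod z \<le> snd J" "z = complex_of_real (cmod z) * cis (2*pi*\<theta>)"
        "\<bar>\<theta> - fst J\<bar> \<le> snd J/2"
      by (auto elim!: QboxE)
    have "z = complex_of_real (cmod z) * cis (2*pi*(\<theta> - of_int n))"
      using z(3) by (simp add: cis_2pi_diff_of_int)
    moreover have "\<bar>(\<theta> - of_int n) - fst I\<bar> \<le> snd I/2" "1 - cmod z \<le> snd I"
      using z(2,4) n unfolding abs_le_iff by linarith+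
    ultimately show "z \<in> Qbox I" using z(1) by (intro QboxI) auto
  qed
qed

lemma null_sets_closed_segment_0: "closed_segment 0 (w::complex) \<in> null_sets lebesgue"
proof (cases "w = 0")
  case True
  then show ?thesis by (simp add: negligible_iff_null_sets[symmetric] negligible_sing)
next
  case False
  have "closed_segment 0 w \<subseteq> {x. (\<i> * w) \<bullet> x = 0}"
    by (auto simp: in_segment inner_complex_def algebra_simps)
  moreover have "negligible {x. (\<i> * w) \<bullet> x = 0}"
    using False by (intro negligible_hyperplane) simp
  ultimately show ?thesis
    using negligible_subset negligible_iff_null_sets by blast
qed

lemma polar_in_closed_segment:
  "cmod z \<le> 1 \<Longrightarrow> z = complex_of_real (cmod z) * w \<Longrightarrow> z \<in> closed_segment 0 w"
  unfolding in_segment by (intro conjI exI[of _ "cmod z"]) (auto simp: scaleR_conv_of_real)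

text \<open>Boxes over disjoint arcs can only meet on the two radii through the right end points of
  the arcs, since the arcs are half-open but the boxes are closed in the angular variable.\<close>

lemma Qbox_Int_null_if_arcs_disjoint:
  assumes disj: "arc_set I \<inter> arc_set J = {}"
  shows "Qbox I \<inter> Qbox J \<in> null_sets lebesgue"
proof -
  define rI rJ where "rI = closed_segment 0 (cis (2*pi*(fst I + snd I/2)))"
    and "rJ = closed_segment 0 (cis (2*pi*(fst J + snd J/2)))"
  have "Qbox I \<inter> Qbox J \<subseteq> rI \<union> rJ"
  proof
    fix z assume "z \<in> Qbox I \<inter> Qbox J"
    then obtain \<theta>1 \<theta>2 where z: "cmod z < 1" "z = complex_of_real (cmod z) * cis (2*pi*\<theta>1)"
        "\<bar>\<theta>1 - fst I\<bar> \<le> snd I/2" "z = complex_of_real (cmod z) * cis (2*pi*\<theta>2)" "\<bar>\<theta>2 - fst J\<bar> \<le> snd J/2"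
      by (auto elim!: QboxE)
    show "z \<in> rI \<union> rJ"
    proof (cases "z = 0")
      case True then show ?thesis by (simp add: rI_def rJ_def)
    next
      case False
      then have "cis (2*pi*\<theta>1) = cis (2*pi*\<theta>2)"
        using z(2,4) by (metis mult_cancel_left mult_zero_left)
      moreover have "cis (2*pi*\<theta>1) \<in> arc_set I" if "\<theta>1 \<noteq> fst I + snd I/2"
        using z(3) that unfolding abs_le_iff by (intro arc_setI) linarith+
      moreover have "cis (2*pi*\<theta>2) \<in> arc_set J" if "\<theta>2 \<noteq> fst J + snd J/2"
        using z(5) that unfolding abs_le_iff by (intro arc_setI) linarith+
      ultimately have "\<theta>1 = fst I + snd I/2 \<or> \<theta>2 = fst J + snd J/2"
        using disj by auto
      then show ?thesis
        using z(1,2,4) polar_in_closed_segment[of z] by (auto simp: rI_def rJ_def)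
    qed
  qed
  moreover have "rI \<union> rJ \<in> null_sets lebesgue"
    unfolding rI_def rJ_def using null_sets_closed_segment_0 by blast
  ultimately show ?thesis
    by (meson negligible_subset negligible_iff_null_sets)
qed

lemma sets_lebesgue_Qbox [measurable]: "Qbox I \<in> sets lebesgue"
proof -
  define c l where "c = fst I" "l = snd I"
  define K where "K = (\<lambda>p. complex_of_real (fst p) * cis (2*pi*(snd p))) ` ({0..1} \<times> {c - l/2..c + l/2})"
  have "compact K"
    unfolding K_def by (intro compact_continuous_image compact_Times compact_Icc continuous_intros)
  have eq: "Qbox I = K \<inter> ball 0 1 \<inter> {z. 1 - cmod z \<le> l}"
  proof (intro equalityI subsetI)
    fix z assume "z \<in> Qbox I"
    then obtain \<theta> where z: "cmod z < 1" "1 - cmod z \<le> l" "z = complex_of_real (cmod z) * cis (2*pi*\<theta>)"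
        "\<bar>\<theta> - c\<bar> \<le> l/2"
      unfolding c_l_def by (auto elim!: QboxE)
    have "(cmod z, \<theta>) \<in> {0..1} \<times> {c - l/2..c + l/2}" using z(1,4) unfolding abs_le_iff by auto
    then have "z \<in> K" unfolding K_def using z(3) by (intro image_eqI[of _ _ "(cmod z, \<theta>)"]) auto
    then show "z \<in> K \<inter> ball 0 1 \<inter> {z. 1 - cmod z \<le> l}" using z by auto
  next
    fix z assume "z \<in> K \<inter> ball 0 1 \<inter> {z. 1 - cmod z \<le> l}"
    then obtain r \<theta> where z: "z = complex_of_real r * cis (2*pi*\<theta>)" "0 \<le> r" "c - l/2 \<le> \<theta>" "\<theta> \<le> c + l/2"
      "cmod z < 1" "1 - cmod z \<le> l"
      unfolding K_def by auto
    have "cmod z = r" using z(1,2) by (simp add: norm_mult)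
    moreover have "\<bar>\<theta> - c\<bar> \<le> l/2" using z(3,4) unfolding abs_le_iff by linarith
    ultimately show "z \<in> Qbox I" using z unfolding c_l_def by (intro QboxI[of _ _ \<theta>]) auto
  qed
  have "closed {z::complex. 1 - cmod z \<le> l}"
    by (intro closed_Collect_le continuous_intros)
  moreover have "K \<in> sets borel"
    using \<open>compact K\<close> by (simp add: borel_closed compact_imp_closed)
  ultimately have "Qbox I \<in> sets borel"
    unfolding eq by (intro sets.Int) (auto intro: borel_closed borel_open)
  then show ?thesis by simp
qed

lemma Tbox_polar_window:
  assumes l: "0 < snd I" "snd I \<le> 1"
    and r: "1 - snd I < cmod z" "cmod z < 1 - snd I/2"
    and angle: "\<bar>Arg (z * cis (-(2*pi*fst I)))\<bar> < pi * snd I"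
  shows "z \<in> Tbox I"
proof -
  define w where "w = z * cis (-(2*pi*fst I))"
  define \<theta> where "\<theta> = fst I + Arg w / (2*pi)"
  have "z = w * cis (2*pi*fst I)" unfolding w_def by (simp add: mult.assoc cis_mult)
  also have "w = complex_of_real (cmod z) * cis (Arg w)"
    using rcis_cmod_Arg[of w] by (simp add: rcis_def w_def norm_mult)
  also have "complex_of_real (cmod z) * cis (Arg w) * cis (2*pi*fst I) = complex_of_real (cmod z) * cis (2*pi*\<theta>)"
    unfolding \<theta>_def by (simp add: mult.assoc cis_mult algebra_simps)
  finally have "z = complex_of_real (cmod z) * cis (2*pi*\<theta>)" .
  moreover have "fst I - snd I/2 \<le> \<theta>" "\<theta> < fst I + snd I/2"
    using angle pi_gt_zero unfolding \<theta>_def w_def by (auto simp: field_simps abs_less_iff)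
  ultimately show ?thesis using l r by (intro TboxI[of _ _ \<theta>]) auto
qed

lemma interior_Tbox_nonempty:
  assumes l: "0 < snd I" "snd I \<le> 1"
  shows "interior (Tbox I) \<noteq> {}"
proof -
  define g where "g = (\<lambda>z. z * cis (-(2*pi*fst I)))"
  define W where "W = Arg -` {-(pi * snd I)<..<pi * snd I} \<inter> (- \<real>\<^sub>\<le>\<^sub>0)"
  define U where "U = {z. 1 - snd I < cmod z \<and> cmod z < 1 - snd I/2} \<inter> g -` W"
  have "open W"
    using continuous_on_Arg unfolding W_def
    by (subst (asm) continuous_on_open_vimage) auto
  then have "open (g -` W)"
    unfolding g_def by (intro continuous_open_vimage[OF \<open>open W\<close>] continuous_intros)
  then have "open U"
    unfolding U_def by (intro open_Int[OF _ \<open>open (g -` W)\<close>] open_Collect_conj open_Collect_less continuous_intros)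
  moreover have "U \<subseteq> Tbox I"
  proof
    fix z assume "z \<in> U"
    then show "z \<in> Tbox I"
      using l by (intro Tbox_polar_window) (auto simp: U_def W_def g_def abs_less_iff)
  qed
  ultimately have "U \<subseteq> interior (Tbox I)" by (simp add: interior_maximal)
  define r0 where "r0 = 1 - 3 * snd I/4"
  define z0 where "z0 = complex_of_real r0 * cis (2*pi*fst I)"
  have r0: "0 < r0" "1 - snd I < r0" "r0 < 1 - snd I/2" using l unfolding r0_def by simp_all
  then have "g z0 = complex_of_real r0" "cmod z0 = r0"
    unfolding g_def z0_def by (simp_all add: mult.assoc cis_mult norm_mult)
  then have "z0 \<in> U"
    using l r0 pi_gt_zero by (auto simp: U_def W_def complex_nonpos_Reals_iff)
  with \<open>U \<subseteq> interior (Tbox I)\<close> show ?thesis by auto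
qed

text \<open>The top halves T_I are pairwise disjoint and have interior points.\<close>

lemma countable_dyadic_grid:
  assumes "dyadic_grid D"
  shows "countable D"
proof -
  have len: "\<And>I. I \<in> D \<Longrightarrow> 0 < snd I \<and> snd I \<le> 1"
    using assms unfolding dyadic_grid_def arclen_def by auto
  have disj: "\<And>I J. I \<in> D \<Longrightarrow> J \<in> D \<Longrightarrow> I \<noteq> J \<Longrightarrow> Tbox I \<inter> Tbox J = {}"
    using assms unfolding dyadic_grid_def by blast
  have "countable (Tbox ` D)"
  proof (rule countable_disjoint_nonempty_interior_subsets)
    show "pairwise disjnt (Tbox ` D)"
      unfolding pairwise_def disjnt_def using disj by (metis imageE)
    show "\<And>S. S \<in> Tbox ` D \<Longrightarrow> interior S = {} \<Longrightarrow> S = {}"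
      using interior_Tbox_nonempty len by blast
  qed
  moreover have "inj_on Tbox D"
    unfolding inj_on_def using disj interior_Tbox_nonempty len interior_subset
    by (metis inf.idem subset_empty)
  ultimately show ?thesis by (rule countable_image_inj_on)
qed

lemma dyadic_Qbox_nested_or_null:
  assumes "dyadic_grid D" "I \<in> D" "J \<in> D"
  shows "Qbox J \<subseteq> Qbox I \<or> Qbox I \<subseteq> Qbox J \<or> Qbox I \<inter> Qbox J \<in> null_sets lebesgue"
proof -
  have len: "0 < snd I" "snd I \<le> 1" "0 < snd J" "snd J \<le> 1"
    using assms unfolding dyadic_grid_def arclen_def by auto
  have "arc_set I \<inter> arc_set J = {} \<or> arc_set I \<subseteq> arc_set J \<or> arc_set J \<subseteq> arc_set I"
    using assms unfolding dyadic_grid_def by blast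
  then show ?thesis
    using Qbox_Int_null_if_arcs_disjoint[of I J] Qbox_mono[of I J] Qbox_mono[of J I] len by blast
qed

section \<open>A good-lambda estimate for nested families of sets\<close>

lemma geometric_tail_sum_ennreal:
  fixes A :: real
  assumes "0 \<le> A"
  shows "(\<Sum>k. ennreal (if m \<le> k then A * (1/2)^k else 0)) = ennreal (2 * A * (1/2)^m)"
proof -
  define g where "g = (\<lambda>k::nat. if m \<le> k then A * (1/2)^k else 0)"
  have "(\<lambda>i. (A * (1/2)^m) * (1/2::real)^i) sums ((A * (1/2)^m) * 2)"
    using sums_mult[OF geometric_sums[of "1/2::real"]] by simp
  moreover have "(\<lambda>i. g (i + m)) = (\<lambda>i. (A * (1/2)^m) * (1/2::real)^i)"
    by (auto simp: g_def power_add fun_eq_iff)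
  ultimately have "(\<lambda>i. g (i + m)) sums ((A * (1/2)^m) * 2)"
    by simp
  then have "g sums ((A * (1/2)^m) * 2 + (\<Sum>i<m. g i))"
    by (simp add: sums_iff_shift)
  then have "g sums (2 * A * (1/2)^m)"
    by (simp add: g_def mult_ac)
  moreover have "\<And>k. 0 \<le> g k" using assms by (simp add: g_def)
  ultimately show ?thesis unfolding g_def by (intro suminf_ennreal_eq)
qed

lemma dyadic_level_sum_eq:
  fixes A t :: real
  assumes A: "0 < A" and t: "0 < t"
  defines "m \<equiv> LEAST k. A * (1/2::real)^k < t"
  shows "(\<Sum>k. ennreal (if A * (1/2)^k < t then A * (1/2)^k else 0)) = ennreal (2 * A * (1/2)^m)"
    and "A * (1/2)^m < t"
    and "0 < m \<Longrightarrow> t \<le> 2 * A * (1/2)^m"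
proof -
  obtain N where "(1/2::real)^N < t / A" using real_arch_pow_inv[of "t/A" "1/2"] A t by auto
  then have "A * (1/2::real)^N < t" using A by (simp add: pos_less_divide_eq mult.commute)
  then show lt: "A * (1/2)^m < t" unfolding m_def by (rule LeastI)
  have iff: "A * (1/2::real)^k < t \<longleftrightarrow> m \<le> k" for k
  proof
    assume "A * (1/2::real)^k < t" then show "m \<le> k" unfolding m_def by (rule Least_le)
  next
    assume "m \<le> k"
    then have "(1/2::real)^k \<le> (1/2)^m" by (rule power_decreasing) auto
    then have "A * (1/2::real)^k \<le> A * (1/2)^m" using A by simp
    then show "A * (1/2::real)^k < t" using lt by linarith
  qed
  then have "(\<lambda>k. ennreal (if A * (1/2)^k < t then A * (1/2)^k else 0))
      = (\<lambda>k. ennreal (if m \<le> k then A * (1/2)^k else 0))"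
    by (simp only:)
  then show "(\<Sum>k. ennreal (if A * (1/2)^k < t then A * (1/2)^k else 0)) = ennreal (2 * A * (1/2)^m)"
    using geometric_tail_sum_ennreal[of A m] A by (simp only: less_imp_le)
  show "t \<le> 2 * A * (1/2)^m" if "0 < m"
  proof -
    obtain j where j: "m = Suc j" using \<open>0 < m\<close> gr0_implies_Suc by blast
    then have "t \<le> A * (1/2)^j" using iff[of j] by linarith
    then show ?thesis unfolding j by simp
  qed
qed

lemma dyadic_level_sum_le:
  fixes A t :: real
  assumes A: "0 < A"
  shows "(\<Sum>k. ennreal (if A * (1/2)^k < t then A * (1/2)^k else 0)) \<le> ennreal (2 * t)"
proof (cases "0 < t")
  case True
  note level = dyadic_level_sum_eq[OF A True]
  show ?thesis
    unfolding level(1) using level(2) by (intro ennreal_leI) simp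
next
  case False
  have "0 < A * (1/2::real)^k" for k using A by simp
  then have "\<not> A * (1/2::real)^k < t" for k using False by (meson less_trans not_less)
  then show ?thesis by simp
qed

lemma le_dyadic_level_sum:
  fixes A t :: real
  assumes A: "0 < A" and t: "t \<le> A"
  shows "ennreal t \<le> (\<Sum>k. ennreal (if A * (1/2)^k < t then A * (1/2)^k else 0))"
proof (cases "0 < t")
  case True
  define m where "m = (LEAST k. A * (1/2::real)^k < t)"
  note level = dyadic_level_sum_eq[OF A True, folded m_def]
  have "m \<noteq> 0"
  proof
    assume "m = 0"
    then show False using level(2) t by simp
  qed
  then show ?thesis
    unfolding level(1) using level(3) by (intro ennreal_leI) simp
next
  case False
  then show ?thesis by (simp add: ennreal_neg)
qed

lemma emeasure_Un_le_of_Int_null: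
  assumes "A \<in> sets M" "B \<in> sets M" "E \<in> sets M" "A \<inter> B \<in> null_sets M"
    and "emeasure M A \<le> c * emeasure M (A \<inter> E)" "emeasure M B \<le> c * emeasure M (B \<inter> E)"
  shows "emeasure M (A \<union> B) \<le> c * emeasure M ((A \<union> B) \<inter> E)"
proof -
  have null: "(A \<inter> E) \<inter> (B \<inter> E) \<in> null_sets M"
    by (rule null_sets_subset[OF assms(4)]) (use assms(1-3) in auto)
  have "emeasure M (A \<union> B) = emeasure M A + emeasure M B"
    using assms(1,2,4) by (rule emeasure_Un')
  also have "\<dots> \<le> c * emeasure M (A \<inter> E) + c * emeasure M (B \<inter> E)"
    using assms(5,6) by (rule add_mono)
  also have "\<dots> = c * emeasure M ((A \<inter> E) \<union> (B \<inter> E))"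
    using emeasure_Un'[OF _ _ null] assms(1-3) by (simp add: distrib_left)
  also have "(A \<inter> E) \<union> (B \<inter> E) = (A \<union> B) \<inter> E" by auto
  finally show ?thesis .
qed

text \<open>This replaces the disjoint decomposition into maximal sets of a stopping-time argument:
  a maximal member of the family is a.e. disjoint from every member not contained in it.\<close>

lemma emeasure_Union_nested_or_null_le:
  assumes "finite G" "G \<subseteq> sets M" "E \<in> sets M"
    and "\<forall>B\<in>G. \<forall>B'\<in>G. B \<subseteq> B' \<or> B' \<subseteq> B \<or> B \<inter> B' \<in> null_sets M"
    and "\<forall>B\<in>G. emeasure M B \<le> c * emeasure M (B \<inter> E)"
  shows "emeasure M (\<Union>G) \<le> c * emeasure M (\<Union>G \<inter> E)"
  using assms
proof (induction G rule: finite_psubset_induct)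
  case (psubset G)
  note sets = psubset.prems(1) and E = psubset.prems(2)
    and nested = psubset.prems(3) and good = psubset.prems(4)
  show ?case
  proof (cases "G = {}")
    case True then show ?thesis by simp
  next
    case False
    obtain B0 where B0: "B0 \<in> G" "\<forall>B\<in>G. B0 \<subseteq> B \<longrightarrow> B0 = B"
      using finite_has_maximal[OF psubset.hyps(1) False] by auto
    define G' where "G' = {B \<in> G. \<not> B \<subseteq> B0}"
    have G'G: "G' \<subset> G" using B0 by (auto simp: G'_def)
    have IH: "emeasure M (\<Union>G') \<le> c * emeasure M (\<Union>G' \<inter> E)"
    proof (rule psubset.IH[OF G'G])
      show "G' \<subseteq> sets M" using G'G sets by blast
      show "\<forall>B\<in>G'. \<forall>B'\<in>G'. B \<subseteq> B' \<or> B' \<subseteq> B \<or> B \<inter> B' \<in> null_sets M"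
        using G'G nested by (meson psubset_imp_subset subsetD)
      show "\<forall>B\<in>G'. emeasure M B \<le> c * emeasure M (B \<inter> E)"
        using G'G good by blast
    qed (rule E)
    have unionG: "\<Union>G = B0 \<union> \<Union>G'" using B0 by (auto simp: G'_def)
    have finG': "finite G'" using G'G psubset.hyps(1) by (meson finite_subset psubset_imp_subset)
    have G's: "\<Union>G' \<in> sets M"
      using G'G finG' sets by (intro sets.finite_Union) auto
    have B0s: "B0 \<in> sets M" using B0 sets by auto
    have "B0 \<inter> B \<in> null_sets M" if "B \<in> G'" for B
    proof -
      have B: "B \<in> G" "\<not> B \<subseteq> B0" using that by (auto simp: G'_def)
      then have "\<not> B0 \<subseteq> B" using B0 by auto
      then show ?thesis using nested[rule_format, OF B0(1) B(1)] B(2) by blast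
    qed
    then have "(\<Union>B\<in>G'. B0 \<inter> B) \<in> null_sets M"
      using finG' by (rule null_sets.finite_UN[rotated])
    then have null: "B0 \<inter> \<Union>G' \<in> null_sets M"
      by (simp only: Int_Union)
    show ?thesis
      unfolding unionG
      by (rule emeasure_Un_le_of_Int_null[OF B0s G's E null]) (use good B0(1) IH in auto)
  qed
qed

lemma emeasure_Union_superlevel_le:
  fixes f :: "'a \<Rightarrow> real" and a :: "'a set \<Rightarrow> real" and c :: ennreal
  assumes f: "f \<in> borel_measurable M" and G: "finite G" "G \<subseteq> sets M"
    and nested: "\<forall>B\<in>G. \<forall>B'\<in>G. B \<subseteq> B' \<or> B' \<subseteq> B \<or> B \<inter> B' \<in> null_sets M"
    and \<epsilon>: "0 < \<epsilon>" and t: "0 < t"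
    and good: "\<forall>B\<in>G. 0 < a B \<longrightarrow> emeasure M B \<le> c * emeasure M (B \<inter> {x \<in> space M. \<epsilon> * a B < f x})"
  shows "emeasure M (\<Union>{B\<in>G. t < a B}) \<le> c * emeasure M {x \<in> space M. \<epsilon> * t < f x}"
proof -
  define E where "E = {x \<in> space M. \<epsilon> * t < f x}"
  have E: "E \<in> sets M" unfolding E_def using f by measurable
  have "emeasure M B \<le> c * emeasure M (B \<inter> E)" if B: "B \<in> G" "t < a B" for B
  proof -
    have "emeasure M B \<le> c * emeasure M (B \<inter> {x \<in> space M. \<epsilon> * a B < f x})"
      using good B t by auto
    also have "\<dots> \<le> c * emeasure M (B \<inter> E)"
    proof (rule mult_left_mono[OF emeasure_mono])
      have "\<epsilon> * t < \<epsilon> * a B" using B \<epsilon> by simp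
      then show "B \<inter> {x \<in> space M. \<epsilon> * a B < f x} \<subseteq> B \<inter> E" by (auto simp: E_def)
      show "B \<inter> E \<in> sets M" using B G E by auto
    qed simp
    finally show ?thesis .
  qed
  then have "emeasure M (\<Union>{B\<in>G. t < a B}) \<le> c * emeasure M (\<Union>{B\<in>G. t < a B} \<inter> E)"
    using G nested E by (intro emeasure_Union_nested_or_null_le) auto
  also have "\<dots> \<le> c * emeasure M E"
    by (rule mult_left_mono[OF emeasure_mono]) (use E in auto)
  finally show ?thesis unfolding E_def .
qed

lemma SUP_indicator_le_level_sum:
  fixes a :: "'a set \<Rightarrow> real"
  assumes A: "0 < A" and aA: "\<forall>B\<in>G. a B \<le> A"
  shows "(SUP B\<in>G. ennreal (a B) * indicator B x)
    \<le> (\<Sum>k. ennreal (A * (1/2)^k) * indicator (\<Union>{B\<in>G. A * (1/2)^k < a B}) x)"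
proof (rule SUP_least)
  fix B assume B: "B \<in> G"
  show "ennreal (a B) * indicator B x \<le> (\<Sum>k. ennreal (A * (1/2)^k) * indicator (\<Union>{B\<in>G. A * (1/2)^k < a B}) x)"
  proof (cases "x \<in> B")
    case True
    have "ennreal (a B) \<le> (\<Sum>k. ennreal (if A * (1/2)^k < a B then A * (1/2)^k else 0))"
      using le_dyadic_level_sum[OF A] aA B by blast
    also have "\<dots> \<le> (\<Sum>k. ennreal (A * (1/2)^k) * indicator (\<Union>{B\<in>G. A * (1/2)^k < a B}) x)"
    proof (intro suminf_le summableI)
      fix k
      have "x \<in> \<Union>{B\<in>G. A * (1/2)^k < a B}" if "A * (1/2)^k < a B" using that B True by auto
      then show "ennreal (if A * (1/2)^k < a B then A * (1/2)^k else 0)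
          \<le> ennreal (A * (1/2)^k) * indicator (\<Union>{B\<in>G. A * (1/2)^k < a B}) x"
        by simp
    qed
    finally show ?thesis using True by simp
  qed simp
qed

lemma level_sum_indicator_superlevel_le:
  fixes f :: "'a \<Rightarrow> real"
  assumes A: "0 < A" and \<epsilon>: "0 < \<epsilon>" and x: "x \<in> S"
  shows "(\<Sum>k. ennreal (A * (1/2)^k) * indicator {y \<in> S. \<epsilon> * (A * (1/2)^k) < f y} x)
    \<le> ennreal (2/\<epsilon>) * ennreal (f x)"
proof -
  have "\<epsilon> * (A * (1/2)^k) < f x \<longleftrightarrow> A * (1/2)^k < f x / \<epsilon>" for k
    using \<epsilon> by (simp add: pos_less_divide_eq mult.commute)
  then have "(\<Sum>k. ennreal (A * (1/2)^k) * indicator {y \<in> S. \<epsilon> * (A * (1/2)^k) < f y} x)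
      = (\<Sum>k. ennreal (if A * (1/2)^k < f x / \<epsilon> then A * (1/2)^k else 0))"
    using x by (intro suminf_cong) auto
  also have "\<dots> \<le> ennreal (2 * (f x / \<epsilon>))" by (rule dyadic_level_sum_le[OF A])
  finally show ?thesis using \<epsilon> by (simp add: ennreal_mult'[symmetric])
qed

lemma nn_integral_SUP_finite_nested_le:
  fixes f :: "'a \<Rightarrow> real" and a :: "'a set \<Rightarrow> real" and c :: ennreal
  assumes f: "f \<in> borel_measurable M" and G: "finite G" "G \<subseteq> sets M"
    and nested: "\<forall>B\<in>G. \<forall>B'\<in>G. B \<subseteq> B' \<or> B' \<subseteq> B \<or> B \<inter> B' \<in> null_sets M"
    and \<epsilon>: "0 < \<epsilon>"
    and good: "\<forall>B\<in>G. 0 < a B \<longrightarrow> emeasure M B \<le> c * emeasure M (B \<inter> {x \<in> space M. \<epsilon> * a B < f x})"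
  shows "(\<integral>\<^sup>+x. (SUP B\<in>G. ennreal (a B) * indicator B x) \<partial>M) \<le> c * ennreal (2/\<epsilon>) * (\<integral>\<^sup>+x. ennreal (f x) \<partial>M)"
proof (cases "\<exists>B\<in>G. 0 < a B")
  case False
  then have "(SUP B\<in>G. ennreal (a B) * indicator B x) = 0" for x
    by (intro antisym SUP_least) (auto simp: ennreal_neg not_less)
  then show ?thesis by simp
next
  case True
  define A where "A = Max (a ` G)"
  have aA: "\<forall>B\<in>G. a B \<le> A" unfolding A_def using G by simp
  have A: "0 < A" using True aA by force
  define lam where "lam k = A * (1/2::real)^k" for k :: nat
  define Om where "Om k = \<Union>{B\<in>G. lam k < a B}" for k
  define E where "E k = {x \<in> space M. \<epsilon> * lam k < f x}" for k
  have [measurable]: "Om k \<in> sets M" "E k \<in> sets M" for k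
    unfolding Om_def E_def using G f by (auto intro: sets.finite_Union)
  have sum_E_le: "(\<Sum>k. ennreal (lam k) * indicator (E k) x) \<le> ennreal (2/\<epsilon>) * ennreal (f x)"
    if "x \<in> space M" for x
    unfolding lam_def E_def using level_sum_indicator_superlevel_le[OF A \<epsilon> that] .
  have "(\<integral>\<^sup>+x. (SUP B\<in>G. ennreal (a B) * indicator B x) \<partial>M) \<le> (\<integral>\<^sup>+x. (\<Sum>k. ennreal (lam k) * indicator (Om k) x) \<partial>M)"
    unfolding lam_def Om_def using SUP_indicator_le_level_sum[OF A aA] by (rule nn_integral_mono)
  also have "\<dots> = (\<Sum>k. ennreal (lam k) * emeasure M (Om k))"
    by (simp add: nn_integral_suminf nn_integral_cmult_indicator)
  also have "\<dots> \<le> (\<Sum>k. c * (ennreal (lam k) * emeasure M (E k)))"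
  proof (intro suminf_le summableI)
    fix k
    have "emeasure M (Om k) \<le> c * emeasure M (E k)"
      unfolding Om_def E_def using A G nested \<epsilon> good
      by (intro emeasure_Union_superlevel_le[OF f]) (auto simp: lam_def)
    from mult_left_mono[OF this, of "ennreal (lam k)"]
    show "ennreal (lam k) * emeasure M (Om k) \<le> c * (ennreal (lam k) * emeasure M (E k))"
      by (simp add: mult_ac)
  qed
  also have "\<dots> = c * (\<integral>\<^sup>+x. (\<Sum>k. ennreal (lam k) * indicator (E k) x) \<partial>M)"
    by (simp add: nn_integral_suminf nn_integral_cmult_indicator)
  also have "\<dots> \<le> c * (\<integral>\<^sup>+x. ennreal (2/\<epsilon>) * ennreal (f x) \<partial>M)"
    by (rule mult_left_mono) (auto intro!: nn_integral_mono sum_E_le)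
  also have "\<dots> = c * ennreal (2/\<epsilon>) * (\<integral>\<^sup>+x. ennreal (f x) \<partial>M)"
    using f by (simp add: nn_integral_cmult mult.assoc)
  finally show ?thesis .
qed

lemma nn_integral_SUP_countable_nested_le:
  fixes f :: "'a \<Rightarrow> real" and a :: "'a set \<Rightarrow> real" and c :: ennreal
  assumes f: "f \<in> borel_measurable M" and G: "countable G" "G \<subseteq> sets M"
    and nested: "\<forall>B\<in>G. \<forall>B'\<in>G. B \<subseteq> B' \<or> B' \<subseteq> B \<or> B \<inter> B' \<in> null_sets M"
    and \<epsilon>: "0 < \<epsilon>"
    and good: "\<forall>B\<in>G. 0 < a B \<longrightarrow> emeasure M B \<le> c * emeasure M (B \<inter> {x \<in> space M. \<epsilon> * a B < f x})"
  shows "(\<integral>\<^sup>+x. (SUP B\<in>G. ennreal (a B) * indicator B x) \<partial>M) \<le> c * ennreal (2/\<epsilon>) * (\<integral>\<^sup>+x. ennreal (f x) \<partial>M)"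
proof (cases "G = {}")
  case True
  then show ?thesis by (simp add: bot_ennreal)
next
  case False
  define Gn where "Gn n = from_nat_into G ` {..n}" for n
  define h where "h n x = (SUP B\<in>Gn n. ennreal (a B) * indicator B x)" for n x
  have Gn_G: "Gn n \<subseteq> G" for n
    using range_from_nat_into_subset[OF False] by (auto simp: Gn_def)
  have "(SUP B\<in>G. ennreal (a B) * indicator B x) = (SUP n. h n x)" for x
  proof -
    have "G \<subseteq> (\<Union>n. Gn n)"
      using from_nat_into_surj[OF G(1)] by (force simp: Gn_def)
    then have "G = (\<Union>n. Gn n)" using Gn_G by blast
    then show ?thesis unfolding h_def by (simp add: SUP_UNION)
  qed
  moreover have "incseq h"
  proof (intro incseq_SucI le_funI)
    fix n x
    have "Gn n \<subseteq> Gn (Suc n)" by (auto simp: Gn_def)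
    then show "h n x \<le> h (Suc n) x" unfolding h_def by (rule SUP_subset_mono) simp
  qed
  moreover have "h n \<in> borel_measurable M" for n
  proof -
    have "B \<in> sets M" if "B \<in> Gn n" for B using that Gn_G G(2) by blast
    then show ?thesis
      unfolding h_def
      by (intro borel_measurable_SUP borel_measurable_times_ennreal borel_measurable_indicator)
        (auto simp: Gn_def)
  qed
  ultimately have "(\<integral>\<^sup>+x. (SUP B\<in>G. ennreal (a B) * indicator B x) \<partial>M) = (SUP n. \<integral>\<^sup>+x. h n x \<partial>M)"
    using nn_integral_monotone_convergence_SUP[of h M] by simp
  also have "\<dots> \<le> c * ennreal (2/\<epsilon>) * (\<integral>\<^sup>+x. ennreal (f x) \<partial>M)"
  proof (rule SUP_least)
    fix n
    have "finite (Gn n)" "Gn n \<subseteq> sets M" using Gn_G G by (auto simp: Gn_def)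
    then show "(\<integral>\<^sup>+x. h n x \<partial>M) \<le> c * ennreal (2/\<epsilon>) * (\<integral>\<^sup>+x. ennreal (f x) \<partial>M)"
      unfolding h_def using Gn_G[of n] nested good
      by (intro nn_integral_SUP_finite_nested_le[OF f _ _ _ \<epsilon>]) blast+
  qed
  finally show ?thesis .
qed

section \<open>Reverse Hoelder inequalities force large values\<close>

lemma Young_split_powr:
  fixes y K s \<epsilon> \<eta> :: real
  assumes y: "0 \<le> y" and s: "0 < s" "s < 1" and K: "0 < K" and \<epsilon>: "0 < \<epsilon>" and \<eta>: "0 < \<eta>"
    and \<epsilon>K: "\<epsilon> powr s = 1/(4*K)" and \<eta>K: "\<eta> powr (1-s) = 1/(4*K)"
  shows "K * y powr s \<le> 1/4 + s/4 * y + (if \<epsilon> < y then (1-s)/(4*\<eta>) else 0)"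
proof (cases "\<epsilon> < y")
  case False
  then have "y powr s \<le> \<epsilon> powr s" using y s by (intro powr_mono2) auto
  then have "K * y powr s \<le> 1/4" using K \<epsilon>K by (simp add: field_simps)
  moreover have "0 \<le> s/4 * y" using s y by simp
  ultimately show ?thesis using False by simp
next
  case True
  then have "0 < y" using \<epsilon> by linarith
  then have "y powr s * (1/\<eta>) powr (1-s) \<le> s * y + (1-s) * (1/\<eta>)"
    using Youngs_inequality_0[of s "1-s" y "1/\<eta>"] s \<eta> by simp
  moreover have "(1/\<eta>) powr (1-s) = 4*K"
    using \<eta>K \<eta> K by (simp add: powr_divide)
  ultimately have "4 * (K * y powr s) \<le> s * y + (1-s)/\<eta>"
    by (simp add: mult_ac)
  moreover have "(1-s)/(4*\<eta>) = ((1-s)/\<eta>)/4" by simp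
  ultimately have "K * y powr s \<le> s/4 * y + (1-s)/(4*\<eta>)"
    by linarith
  then show ?thesis using True by simp
qed

lemma reverse_Hoelder_Young_split:
  fixes M :: "'a measure" and f :: "'a \<Rightarrow> real" and a v K s \<epsilon> \<eta> :: real
  assumes f: "f \<in> borel_measurable M" "\<And>x. 0 \<le> f x" and B: "B \<in> sets M"
    and s: "0 < s" "s < 1" and K: "0 < K" and \<epsilon>: "0 < \<epsilon>" and \<eta>: "0 < \<eta>"
    and \<epsilon>K: "\<epsilon> powr s = 1/(4*K)" and \<eta>K: "\<eta> powr (1-s) = 1/(4*K)" and a: "0 < a"
    and v: "0 \<le> v" "emeasure M B = ennreal v"
    and mean: "(\<integral>\<^sup>+x. ennreal (f x) * indicator B x \<partial>M) = ennreal (a * v)"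
    and reverse_Hoelder: "ennreal v \<le> ennreal K * (\<integral>\<^sup>+x. ennreal ((f x / a) powr s) * indicator B x \<partial>M)"
  shows "ennreal v \<le> ennreal ((1+s)/4 * v) + ennreal ((1-s)/(4*\<eta>)) * emeasure M (B \<inter> {x\<in>space M. \<epsilon> * a < f x})"
proof -
  define F where "F = B \<inter> {x\<in>space M. \<epsilon> * a < f x}"
  have F: "F \<in> sets M" unfolding F_def using B f by measurable
  define c where "c = (1-s)/(4*\<eta>)"
  have c: "0 \<le> c" using s \<eta> by (simp add: c_def)
  have pointwise: "ennreal K * (ennreal ((f x / a) powr s) * indicator B x)
      \<le> ennreal (1/4) * indicator B x + ennreal (s/(4*a)) * (ennreal (f x) * indicator B x) + ennreal c * indicator F x"
    if x: "x \<in> space M" for x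
  proof (cases "x \<in> B")
    case True
    have "K * (f x / a) powr s \<le> 1/4 + s/4 * (f x / a) + (if \<epsilon> < f x / a then c else 0)"
      unfolding c_def using f(2) a by (intro Young_split_powr[OF _ s K \<epsilon> \<eta> \<epsilon>K \<eta>K]) auto
    also have "\<dots> = 1/4 + s/(4*a) * f x + c * indicator F x"
      using True x a by (simp add: F_def pos_less_divide_eq mult.commute indicator_def)
    finally have "ennreal (K * (f x / a) powr s) \<le> ennreal (1/4 + s/(4*a) * f x + c * indicator F x)"
      by (rule ennreal_leI)
    then show ?thesis
      using True K s a c f(2) by (cases "x \<in> F") (simp_all add: ennreal_mult'[symmetric])
  qed (simp add: F_def)
  have "ennreal v \<le> (\<integral>\<^sup>+x. ennreal K * (ennreal ((f x / a) powr s) * indicator B x) \<partial>M)"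
    using reverse_Hoelder B f by (subst nn_integral_cmult) auto
  also have "\<dots> \<le> (\<integral>\<^sup>+x. ennreal (1/4) * indicator B x + ennreal (s/(4*a)) * (ennreal (f x) * indicator B x)
      + ennreal c * indicator F x \<partial>M)"
    by (rule nn_integral_mono) (rule pointwise)
  also have "\<dots> = ennreal (1/4) * ennreal v + ennreal (s/(4*a)) * ennreal (a * v) + ennreal c * emeasure M F"
    using B F f by (simp add: nn_integral_add nn_integral_cmult nn_integral_cmult_indicator v(2) mean)
  also have "ennreal (1/4) * ennreal v + ennreal (s/(4*a)) * ennreal (a * v) = ennreal (1/4 * v + s/4 * v)"
    using a s v by (simp add: ennreal_mult[symmetric])
  also have "1/4 * v + s/4 * v = (1+s)/4 * v"
    by (simp add: field_simps)
  finally show ?thesis unfolding F_def c_def .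
qed

lemma emeasure_le_superlevel_of_reverse_Hoelder:
  fixes M :: "'a measure" and f :: "'a \<Rightarrow> real" and a v K s \<epsilon> \<eta> :: real
  assumes f: "f \<in> borel_measurable M" "\<And>x. 0 \<le> f x" and B: "B \<in> sets M"
    and s: "0 < s" "s < 1" and K: "0 < K" and \<epsilon>: "0 < \<epsilon>" and \<eta>: "0 < \<eta>"
    and \<epsilon>K: "\<epsilon> powr s = 1/(4*K)" and \<eta>K: "\<eta> powr (1-s) = 1/(4*K)" and a: "0 < a"
    and v: "0 \<le> v" "emeasure M B = ennreal v"
    and mean: "(\<integral>\<^sup>+x. ennreal (f x) * indicator B x \<partial>M) = ennreal (a * v)"
    and reverse_Hoelder: "ennreal v \<le> ennreal K * (\<integral>\<^sup>+x. ennreal ((f x / a) powr s) * indicator B x \<partial>M)"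
  shows "emeasure M B \<le> ennreal ((1-s)/(2*\<eta>)) * emeasure M (B \<inter> {x\<in>space M. \<epsilon> * a < f x})"
proof -
  define F where "F = B \<inter> {x\<in>space M. \<epsilon> * a < f x}"
  have "emeasure M F \<le> ennreal v"
    unfolding F_def v(2)[symmetric] using B by (intro emeasure_mono) auto
  then obtain w where w: "emeasure M F = ennreal w" "0 \<le> w"
    by (metis ennreal_cases ennreal_less_top top.not_eq_extremum leD)
  define c where "c = (1-s)/(4*\<eta>)"
  have c: "0 \<le> c" using s \<eta> by (simp add: c_def)
  have "ennreal v \<le> ennreal ((1+s)/4 * v) + ennreal c * ennreal w"
    using reverse_Hoelder_Young_split[OF assms] unfolding F_def[symmetric] c_def[symmetric] w(1) .
  also have "\<dots> = ennreal ((1+s)/4 * v + c * w)"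
    using s v c w by (simp add: ennreal_mult[symmetric])
  finally have "v \<le> (1+s)/4 * v + c * w"
    using s v c w by (subst (asm) ennreal_le_iff) auto
  moreover have "s/4 * v \<le> 1/4 * v" using s v by (intro mult_right_mono) auto
  ultimately have "v \<le> 2 * c * w" by (simp add: field_simps)
  also have "2 * c * w = (1-s)/(2*\<eta>) * w"
    using \<eta> by (simp add: c_def field_simps)
  finally have "v \<le> (1-s)/(2*\<eta>) * w" .
  then show ?thesis
    using s \<eta> w v by (simp add: F_def ennreal_mult[symmetric] ennreal_leI)
qed

section \<open>Weighted area measure and averages\<close>

definition weighted_area :: "(complex \<Rightarrow> real) \<Rightarrow> complex set \<Rightarrow> complex measure" where
  "weighted_area v Q = density lebesgue (\<lambda>z. ennreal (1/pi) * ennreal (v z) * indicator Q z)"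

lemma sets_weighted_area [simp, measurable_cong]: "sets (weighted_area v Q) = sets lebesgue"
  by (simp add: weighted_area_def)

lemma space_weighted_area [simp]: "space (weighted_area v Q) = UNIV"
  by (simp add: weighted_area_def)

lemma nn_integral_weighted_area:
  assumes [measurable]: "v \<in> borel_measurable lebesgue" "Q \<in> sets lebesgue" "g \<in> borel_measurable lebesgue"
  shows "(\<integral>\<^sup>+z. g z \<partial>weighted_area v Q) = areaint Q (\<lambda>z. g z * ennreal (v z))"
proof -
  have "(\<integral>\<^sup>+z. g z \<partial>weighted_area v Q) = (\<integral>\<^sup>+z. ennreal (1/pi) * ennreal (v z) * indicator Q z * g z \<partial>lebesgue)"
    unfolding weighted_area_def by (intro nn_integral_density) measurable
  also have "\<dots> = (\<integral>\<^sup>+z. ennreal (1/pi) * (g z * ennreal (v z) * indicator Q z) \<partial>lebesgue)"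
    by (intro nn_integral_cong) (simp add: mult_ac)
  also have "\<dots> = areaint Q (\<lambda>z. g z * ennreal (v z))"
    unfolding areaint_def by (intro nn_integral_cmult) measurable
  finally show ?thesis .
qed

lemma nn_integral_indicator_weighted_area:
  assumes [measurable]: "v \<in> borel_measurable lebesgue" "Q \<in> sets lebesgue" "B \<in> sets lebesgue"
    "g \<in> borel_measurable lebesgue" and "B \<subseteq> Q"
  shows "(\<integral>\<^sup>+z. g z * indicator B z \<partial>weighted_area v Q) = areaint B (\<lambda>z. g z * ennreal (v z))"
proof -
  have "(\<integral>\<^sup>+z. g z * indicator B z \<partial>weighted_area v Q) = areaint Q (\<lambda>z. g z * indicator B z * ennreal (v z))"
    by (rule nn_integral_weighted_area) measurable
  also have "\<dots> = areaint B (\<lambda>z. g z * ennreal (v z))"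
    unfolding areaint_def using \<open>B \<subseteq> Q\<close>
    by (intro arg_cong[where f="\<lambda>t. ennreal (1/pi) * t"] nn_integral_cong) (auto simp: indicator_def)
  finally show ?thesis .
qed

lemma emeasure_weighted_area:
  assumes "v \<in> borel_measurable lebesgue" "Q \<in> sets lebesgue" "B \<in> sets lebesgue" "B \<subseteq> Q"
  shows "emeasure (weighted_area v Q) B = areaint B (\<lambda>z. ennreal (v z))"
  using nn_integral_indicator_weighted_area[OF assms(1-3) _ assms(4), of "\<lambda>_. 1"] assms(3)
  by simp

lemma null_sets_weighted_area:
  assumes "v \<in> borel_measurable lebesgue" "Q \<in> sets lebesgue" "N \<in> null_sets lebesgue"
  shows "N \<in> null_sets (weighted_area v Q)"
proof -
  have "AE z in lebesgue. z \<in> N \<longrightarrow> ennreal (1/pi) * ennreal (v z) * indicator Q z = 0"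
    using AE_not_in[OF assms(3)] by eventually_elim auto
  then show ?thesis
    unfolding weighted_area_def using assms by (subst null_sets_density_iff) auto
qed

lemma areaint_mono_set: "B \<subseteq> B' \<Longrightarrow> areaint B g \<le> areaint B' g"
  unfolding areaint_def
  by (rule mult_left_mono) (auto intro!: nn_integral_mono simp: indicator_def)

lemma areaint_null_set:
  assumes "B \<in> null_sets lebesgue"
  shows "areaint B g = 0"
proof -
  have "AE z in lebesgue. g z * indicator B z = 0"
    using AE_not_in[OF assms] by eventually_elim auto
  then show ?thesis
    unfolding areaint_def by (simp add: nn_integral_cong_AE[where v="\<lambda>_. 0"])
qed

lemma areaint_weight_eq_0:
  assumes [measurable]: "v \<in> borel_measurable lebesgue" "B \<in> sets lebesgue"
    and "areaint B (\<lambda>z. ennreal (v z)) = 0"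
  shows "areaint B (\<lambda>z. g z * ennreal (v z)) = 0"
proof -
  have "(\<integral>\<^sup>+z. ennreal (v z) * indicator B z \<partial>lebesgue) = 0"
    using assms(3) pi_gt_zero unfolding areaint_def by (simp add: ennreal_eq_0_iff)
  then have "AE z in lebesgue. ennreal (v z) * indicator B z = 0"
    by (subst (asm) nn_integral_0_iff_AE) auto
  then have "AE z in lebesgue. g z * ennreal (v z) * indicator B z = 0"
    by eventually_elim (simp add: mult.assoc)
  then show ?thesis
    unfolding areaint_def by (simp add: nn_integral_cong_AE[where v="\<lambda>_. 0"])
qed

lemma avgp_1: "avgp 1 v E f = areaint E (\<lambda>z. ennreal (\<bar>f z\<bar> * v z)) / areaint E (\<lambda>z. ennreal (v z))"
proof -
  have "epow x 1 = x" for x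
    by (cases "x = \<infinity>") (auto simp: epow_def ennreal_enn2real_if)
  then show ?thesis by (simp add: avgp_def)
qed

lemma avgp_1_mult_indicator:
  "avgp 1 v E (\<lambda>z. u z * indicator Q z)
     = areaint (E \<inter> Q) (\<lambda>z. ennreal (\<bar>u z\<bar> * v z)) / areaint E (\<lambda>z. ennreal (v z))"
  unfolding avgp_1 areaint_def
  by (intro arg_cong2[where f="(/)"] arg_cong[where f="\<lambda>t. ennreal (1/pi) * t"] nn_integral_cong refl)
    (auto simp: indicator_def)

lemma avgp_1_subset_finite:
  assumes [measurable]: "u \<in> borel_measurable lebesgue" "v \<in> borel_measurable lebesgue" "B \<in> sets lebesgue"
    and "B \<subseteq> Q" and finite: "areaint Q (\<lambda>z. ennreal (\<bar>u z\<bar> * v z)) \<noteq> \<infinity>"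
  shows "avgp 1 v B u \<noteq> \<infinity>"
proof (cases "areaint B (\<lambda>z. ennreal (v z)) = 0")
  case True
  have "areaint B (\<lambda>z. ennreal \<bar>u z\<bar> * ennreal (v z)) = 0"
    by (rule areaint_weight_eq_0[OF _ _ True]) auto
  then show ?thesis by (simp add: avgp_1 ennreal_mult')
next
  case False
  have "areaint B (\<lambda>z. ennreal (\<bar>u z\<bar> * v z)) \<noteq> \<infinity>"
    using areaint_mono_set[OF \<open>B \<subseteq> Q\<close>, of "\<lambda>z. ennreal (\<bar>u z\<bar> * v z)"] finite
    by (auto simp: top_unique)
  then show ?thesis using False by (simp add: avgp_1 ennreal_divide_eq_top_iff)
qed

lemma avgp_1_finite_positive_cases:
  assumes V: "areaint B (\<lambda>z. ennreal (v z)) < \<infinity>" and a: "0 < enn2real (avgp 1 v B u)"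
  obtains w where "areaint B (\<lambda>z. ennreal (v z)) = ennreal w" "0 < w"
    "areaint B (\<lambda>z. ennreal (\<bar>u z\<bar> * v z)) = ennreal (enn2real (avgp 1 v B u) * w)"
proof -
  define U V where "U = areaint B (\<lambda>z. ennreal (\<bar>u z\<bar> * v z))" and "V = areaint B (\<lambda>z. ennreal (v z))"
  define a where "a = enn2real (avgp 1 v B u)"
  have avg: "avgp 1 v B u = U / V" unfolding U_def V_def by (rule avgp_1)
  have a_fin: "avgp 1 v B u = ennreal a"
    using a by (simp add: a_def ennreal_enn2real_if enn2real_positive_iff less_top)
  have "V \<noteq> 0"
  proof
    assume "V = 0"
    then have "avgp 1 v B u = 0 \<or> avgp 1 v B u = \<infinity>" unfolding avg by simp
    then show False using a by auto
  qed
  moreover have "V \<noteq> \<infinity>" using V by (simp add: V_def)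
  ultimately have w: "V = ennreal (enn2real V)" "0 < enn2real V"
    by (auto simp: ennreal_enn2real_if enn2real_positive_iff less_top zero_less_iff_neq_zero)
  have "U = U * V / V"
    using \<open>V \<noteq> 0\<close> \<open>V \<noteq> \<infinity>\<close> by (simp add: ennreal_mult_divide_eq)
  also have "\<dots> = avgp 1 v B u * V"
    unfolding avg by (simp only: ennreal_times_divide[symmetric] ennreal_divide_times)
  also have "\<dots> = ennreal (a * enn2real V)"
    using a_fin w by (simp add: ennreal_mult a_def)
  finally show ?thesis
    using that w by (simp add: U_def V_def a_def)
qed

lemma le_of_powr_mean_bound:
  fixes s C a w S :: real
  assumes s: "0 < s" and C: "0 < C" and a: "0 < a" and w: "0 < w" and S: "0 \<le> S"
    and bound: "a \<le> C * (S powr (1/s) / w powr (1/s))"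
  shows "w \<le> C powr s * (a powr (-s) * S)"
proof -
  have "a powr s \<le> (C * (S powr (1/s) / w powr (1/s))) powr s"
    using bound a s by (intro powr_mono2) auto
  also have "\<dots> = C powr s * (S / w)"
    using C S w s by (simp add: powr_mult powr_divide powr_powr)
  finally have "a powr s * w \<le> C powr s * S"
    using w by (simp add: field_simps)
  then show ?thesis
    using a by (simp add: powr_minus field_simps)
qed

lemma areaint_powr_divide:
  fixes u v :: "complex \<Rightarrow> real"
  assumes [measurable]: "u \<in> borel_measurable lebesgue" "v \<in> borel_measurable lebesgue" "B \<in> sets lebesgue"
  shows "areaint B (\<lambda>z. ennreal ((\<bar>u z\<bar> / a) powr s) * ennreal (v z))
    = ennreal (a powr (-s)) * areaint B (\<lambda>z. ennreal (\<bar>u z\<bar> powr s * v z))"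
proof -
  have "ennreal ((\<bar>u z\<bar> / a) powr s) * ennreal (v z) = ennreal (a powr (-s)) * ennreal (\<bar>u z\<bar> powr s * v z)" for z
  proof -
    have "(\<bar>u z\<bar> / a) powr s = a powr (-s) * \<bar>u z\<bar> powr s"
      unfolding powr_divide by (simp add: powr_minus divide_inverse mult.commute)
    then show ?thesis by (simp add: ennreal_mult' mult.assoc)
  qed
  then have "areaint B (\<lambda>z. ennreal ((\<bar>u z\<bar> / a) powr s) * ennreal (v z))
      = ennreal (1/pi) * (\<integral>\<^sup>+z. ennreal (a powr (-s)) * (ennreal (\<bar>u z\<bar> powr s * v z) * indicator B z) \<partial>lebesgue)"
    unfolding areaint_def by (simp add: mult.assoc)
  also have "\<dots> = ennreal (a powr (-s)) * areaint B (\<lambda>z. ennreal (\<bar>u z\<bar> powr s * v z))"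
    unfolding areaint_def by (subst nn_integral_cmult) (measurable, simp add: mult.left_commute)
  finally show ?thesis .
qed

lemma avgp_reverse_Hoelder_normalized:
  fixes u v :: "complex \<Rightarrow> real"
  assumes [measurable]: "u \<in> borel_measurable lebesgue" "v \<in> borel_measurable lebesgue" "B \<in> sets lebesgue"
    and s: "0 < s" and C: "0 < C"
    and V: "areaint B (\<lambda>z. ennreal (v z)) = ennreal w" "0 < w"
    and a: "avgp 1 v B u = ennreal a" "0 < a"
    and reverse_Hoelder: "avgp 1 v B u \<le> ennreal C * avgp s v B u"
  shows "ennreal w \<le> ennreal (C powr s) * areaint B (\<lambda>z. ennreal ((\<bar>u z\<bar> / a) powr s) * ennreal (v z))"
proof -
  define S where "S = areaint B (\<lambda>z. ennreal (\<bar>u z\<bar> powr s * v z))"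
  have normalized: "areaint B (\<lambda>z. ennreal ((\<bar>u z\<bar> / a) powr s) * ennreal (v z)) = ennreal (a powr (-s)) * S"
    unfolding S_def by (rule areaint_powr_divide) auto
  show ?thesis
  proof (cases "S = \<infinity>")
    case True
    then show ?thesis using a C unfolding normalized by (simp add: ennreal_mult_top)
  next
    case False
    then obtain r where r: "S = ennreal r" "0 \<le> r" by (cases S) auto
    have "avgp s v B u = ennreal (r powr (1/s)) / ennreal (w powr (1/s))"
      unfolding avgp_def S_def[symmetric] V r(1) epow_def using r(2) V(2) by simp
    also have "\<dots> = ennreal (r powr (1/s) / w powr (1/s))"
      using V(2) by (intro divide_ennreal) auto
    finally have "ennreal a \<le> ennreal C * ennreal (r powr (1/s) / w powr (1/s))"
      using reverse_Hoelder a(1) by simp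
    also have "\<dots> = ennreal (C * (r powr (1/s) / w powr (1/s)))"
      using C by (intro ennreal_mult[symmetric]) auto
    finally have "a \<le> C * (r powr (1/s) / w powr (1/s))"
      using C by (subst (asm) ennreal_le_iff) auto
    then have "w \<le> C powr s * (a powr (-s) * r)"
      by (rule le_of_powr_mean_bound[OF s C a(2) V(2) r(2)])
    then show ?thesis
      unfolding normalized r(1) using a(2) r(2) by (simp add: ennreal_leI ennreal_mult[symmetric])
  qed
qed

lemma good_lambda_avgp:
  fixes u v :: "complex \<Rightarrow> real"
  assumes [measurable]: "u \<in> borel_measurable lebesgue" "v \<in> borel_measurable lebesgue"
      "Q \<in> sets lebesgue" "B \<in> sets lebesgue"
    and BQ: "B \<subseteq> Q" and s: "0 < s" "s < 1" and C: "0 < C" and \<epsilon>: "0 < \<epsilon>" and \<eta>: "0 < \<eta>"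
    and \<epsilon>C: "\<epsilon> powr s = 1/(4 * C powr s)" and \<eta>C: "\<eta> powr (1-s) = 1/(4 * C powr s)"
    and V: "areaint B (\<lambda>z. ennreal (v z)) < \<infinity>"
    and reverse_Hoelder: "avgp 1 v B u \<le> ennreal C * avgp s v B u"
    and a: "0 < enn2real (avgp 1 v B u)"
  shows "emeasure (weighted_area v Q) B \<le> ennreal ((1-s)/(2*\<eta>)) *
     emeasure (weighted_area v Q) (B \<inter> {x \<in> space (weighted_area v Q). \<epsilon> * enn2real (avgp 1 v B u) < \<bar>u x\<bar>})"
proof -
  obtain w where w: "areaint B (\<lambda>z. ennreal (v z)) = ennreal w" "0 < w"
      and mean: "areaint B (\<lambda>z. ennreal (\<bar>u z\<bar> * v z)) = ennreal (enn2real (avgp 1 v B u) * w)"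
    using avgp_1_finite_positive_cases[OF V a] .
  have avg: "avgp 1 v B u = ennreal (enn2real (avgp 1 v B u))"
    using a by (simp add: ennreal_enn2real_if enn2real_positive_iff less_top)
  have "(\<integral>\<^sup>+x. ennreal \<bar>u x\<bar> * indicator B x \<partial>weighted_area v Q) = ennreal (enn2real (avgp 1 v B u) * w)"
    using BQ mean by (simp add: nn_integral_indicator_weighted_area ennreal_mult'[symmetric])
  moreover have "ennreal w \<le> ennreal (C powr s) *
      (\<integral>\<^sup>+x. ennreal ((\<bar>u x\<bar> / enn2real (avgp 1 v B u)) powr s) * indicator B x \<partial>weighted_area v Q)"
    using avgp_reverse_Hoelder_normalized[OF _ _ _ s(1) C w avg a reverse_Hoelder] BQ
    by (simp add: nn_integral_indicator_weighted_area)
  moreover have "emeasure (weighted_area v Q) B = ennreal w"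
    using BQ w(1) by (simp add: emeasure_weighted_area)
  ultimately show ?thesis
    using s C \<epsilon> \<eta> \<epsilon>C \<eta>C a w(2)
    by (intro emeasure_le_superlevel_of_reverse_Hoelder[where K="C powr s"]) auto
qed

section \<open>The dyadic maximal function on a Carleson box\<close>

lemma ennreal_inverse_antimono:
  fixes a b :: ennreal
  assumes "a \<le> b"
  shows "inverse b \<le> inverse a"
proof (cases "a = 0 \<or> b = \<infinity>")
  case True
  then show ?thesis by auto
next
  case False
  then obtain x y where xy: "a = ennreal x" "b = ennreal y" "0 < x" "0 \<le> y"
    using assms by (cases a; cases b) (auto simp: top_unique)
  then have "x \<le> y" using assms by simp
  then show ?thesis
    using xy by (simp add: inverse_ennreal ennreal_leI le_imp_inverse_le)
qed

lemma ennreal_divide_antimono: "(a::ennreal) \<le> b \<Longrightarrow> x / b \<le> x / a"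
  unfolding divide_ennreal_def by (rule mult_left_mono[OF ennreal_inverse_antimono]) auto

lemma ennreal_divide_le_of_le_mult:
  fixes x y c :: ennreal
  assumes "x \<le> c * y" "c < \<infinity>"
  shows "x / y \<le> c"
proof (cases "y = 0")
  case True
  then show ?thesis using assms by simp
next
  case False
  then show ?thesis
    using assms by (intro divide_le_posI_ennreal) (auto simp: mult.commute zero_less_iff_neq_zero)
qed

lemma dyadic_max_le_SUP_subboxes:
  fixes u v :: "complex \<Rightarrow> real"
  assumes [measurable]: "u \<in> borel_measurable lebesgue" "v \<in> borel_measurable lebesgue"
    and grid: "dyadic_grid D" and I: "I \<in> D"
    and finite: "areaint (Qbox I) (\<lambda>z. ennreal (\<bar>u z\<bar> * v z)) \<noteq> \<infinity>"
    and z: "z \<in> Qbox I"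
  shows "dyadic_max D v (\<lambda>z. u z * indicator (Qbox I) z) z
    \<le> (SUP B\<in>Qbox ` {J\<in>D. Qbox J \<subseteq> Qbox I}. ennreal (enn2real (avgp 1 v B u)) * indicator B z)"
    (is "_ \<le> ?S")
  unfolding dyadic_max_def
proof (rule SUP_least)
  fix J assume "J \<in> {J \<in> D. z \<in> Qbox J}"
  then have J: "J \<in> D" "z \<in> Qbox J" by auto
  have finite_avg: "avgp 1 v B u = ennreal (enn2real (avgp 1 v B u))"
    if "B \<in> sets lebesgue" "B \<subseteq> Qbox I" for B
    using avgp_1_subset_finite[OF _ _ that finite] by (simp add: ennreal_enn2real_if)
  have "avgp 1 v (Qbox J) u * indicator (Qbox J) z \<le> ?S" if "Qbox J \<subseteq> Qbox I"
    using that J by (subst finite_avg) (auto intro!: SUP_upper2[where i="Qbox J"])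
  moreover have "avgp 1 v (Qbox I) u * indicator (Qbox I) z \<le> ?S"
    using I z by (subst finite_avg) (auto intro!: SUP_upper2[where i="Qbox I"])
  moreover have "areaint (Qbox I) (\<lambda>z. ennreal (\<bar>u z\<bar> * v z)) / areaint (Qbox J) (\<lambda>z. ennreal (v z))
      \<le> avgp 1 v (Qbox I) u" if "Qbox I \<subseteq> Qbox J"
    unfolding avgp_1 using that by (intro ennreal_divide_antimono areaint_mono_set)
  ultimately show "avgp 1 v (Qbox J) (\<lambda>z. u z * indicator (Qbox I) z) \<le> ?S"
    using dyadic_Qbox_nested_or_null[OF grid I J(1)] J(2) z
    by (auto simp: avgp_1_mult_indicator Int_absorb1 Int_absorb2 Int_commute areaint_null_set avgp_1[symmetric]
        intro: order_trans)
qed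

lemma nn_integral_SUP_subboxes_le:
  fixes u v :: "complex \<Rightarrow> real" and C s \<epsilon> \<eta> :: real
  assumes [measurable]: "u \<in> borel_measurable lebesgue" "v \<in> borel_measurable lebesgue"
    and grid: "dyadic_grid D" and I: "I \<in> D"
    and reverse_Hoelder: "\<forall>J\<in>D. avgp 1 v (Qbox J) u \<le> ennreal C * avgp s v (Qbox J) u"
    and s: "0 < s" "s < 1" and C: "0 < C" and \<epsilon>: "0 < \<epsilon>" and \<eta>: "0 < \<eta>"
    and \<epsilon>C: "\<epsilon> powr s = 1/(4 * C powr s)" and \<eta>C: "\<eta> powr (1-s) = 1/(4 * C powr s)"
    and V: "areaint (Qbox I) (\<lambda>z. ennreal (v z)) < \<infinity>"
  shows "(\<integral>\<^sup>+z. (SUP B\<in>Qbox ` {J\<in>D. Qbox J \<subseteq> Qbox I}. ennreal (enn2real (avgp 1 v B u)) * indicator B z)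
      \<partial>weighted_area v (Qbox I))
    \<le> ennreal ((1-s)/(2*\<eta>)) * ennreal (2/\<epsilon>) * areaint (Qbox I) (\<lambda>z. ennreal (\<bar>u z\<bar> * v z))"
proof -
  define G where "G = Qbox ` {J\<in>D. Qbox J \<subseteq> Qbox I}"
  let ?M = "weighted_area v (Qbox I)"
  have "(\<integral>\<^sup>+z. (SUP B\<in>G. ennreal (enn2real (avgp 1 v B u)) * indicator B z) \<partial>?M)
      \<le> ennreal ((1-s)/(2*\<eta>)) * ennreal (2/\<epsilon>) * (\<integral>\<^sup>+z. ennreal \<bar>u z\<bar> \<partial>?M)"
  proof (rule nn_integral_SUP_countable_nested_le)
    show "countable G" "G \<subseteq> sets ?M"
      using countable_dyadic_grid[OF grid] by (auto simp: G_def)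
    show "\<forall>B\<in>G. \<forall>B'\<in>G. B \<subseteq> B' \<or> B' \<subseteq> B \<or> B \<inter> B' \<in> null_sets ?M"
    proof (intro ballI)
      fix B B' assume "B \<in> G" "B' \<in> G"
      then obtain J J' where "J \<in> D" "J' \<in> D" "B = Qbox J" "B' = Qbox J'" by (auto simp: G_def)
      then show "B \<subseteq> B' \<or> B' \<subseteq> B \<or> B \<inter> B' \<in> null_sets ?M"
        using dyadic_Qbox_nested_or_null[OF grid, of J J'] null_sets_weighted_area[of v "Qbox I"] by auto
    qed
    show "\<forall>B\<in>G. 0 < enn2real (avgp 1 v B u) \<longrightarrow> emeasure ?M B
        \<le> ennreal ((1-s)/(2*\<eta>)) * emeasure ?M (B \<inter> {x \<in> space ?M. \<epsilon> * enn2real (avgp 1 v B u) < \<bar>u x\<bar>})"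
    proof (intro ballI impI)
      fix B assume B: "B \<in> G" and a: "0 < enn2real (avgp 1 v B u)"
      then obtain J where J: "J \<in> D" "B = Qbox J" "Qbox J \<subseteq> Qbox I" by (auto simp: G_def)
      have "areaint B (\<lambda>z. ennreal (v z)) < \<infinity>"
        using areaint_mono_set[of B "Qbox I"] V J by (auto intro: le_less_trans)
      then show "emeasure ?M B
          \<le> ennreal ((1-s)/(2*\<eta>)) * emeasure ?M (B \<inter> {x \<in> space ?M. \<epsilon> * enn2real (avgp 1 v B u) < \<bar>u x\<bar>})"
        using J reverse_Hoelder s C \<epsilon> \<eta> \<epsilon>C \<eta>C a by (intro good_lambda_avgp) auto
    qed
  qed (use \<epsilon> in auto)
  also have "(\<integral>\<^sup>+z. ennreal \<bar>u z\<bar> \<partial>?M) = areaint (Qbox I) (\<lambda>z. ennreal (\<bar>u z\<bar> * v z))"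
    by (simp add: nn_integral_weighted_area ennreal_mult')
  finally show ?thesis unfolding G_def .
qed

lemma areaint_dyadic_max_le:
  fixes u v :: "complex \<Rightarrow> real" and C s \<epsilon> \<eta> :: real
  assumes [measurable]: "u \<in> borel_measurable lebesgue" "v \<in> borel_measurable lebesgue"
    and grid: "dyadic_grid D" and I: "I \<in> D"
    and reverse_Hoelder: "\<forall>J\<in>D. avgp 1 v (Qbox J) u \<le> ennreal C * avgp s v (Qbox J) u"
    and s: "0 < s" "s < 1" and C: "0 < C" and \<epsilon>: "0 < \<epsilon>" and \<eta>: "0 < \<eta>"
    and \<epsilon>C: "\<epsilon> powr s = 1/(4 * C powr s)" and \<eta>C: "\<eta> powr (1-s) = 1/(4 * C powr s)"
    and V: "areaint (Qbox I) (\<lambda>z. ennreal (v z)) < \<infinity>"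
    and U: "areaint (Qbox I) (\<lambda>z. ennreal (\<bar>u z\<bar> * v z)) \<noteq> \<infinity>"
  shows "areaint (Qbox I) (\<lambda>z. dyadic_max D v (\<lambda>z. u z * indicator (Qbox I) z) z * ennreal (v z))
    \<le> ennreal ((1-s)/(2*\<eta>)) * ennreal (2/\<epsilon>) * areaint (Qbox I) (\<lambda>z. ennreal (\<bar>u z\<bar> * v z))"
proof -
  define S where "S z = (SUP B\<in>Qbox ` {J\<in>D. Qbox J \<subseteq> Qbox I}. ennreal (enn2real (avgp 1 v B u)) * indicator B z)"
    for z
  have "S \<in> borel_measurable lebesgue"
    using countable_dyadic_grid[OF grid] unfolding S_def
    by (intro borel_measurable_SUP borel_measurable_times_ennreal borel_measurable_indicator) auto
  have "dyadic_max D v (\<lambda>z. u z * indicator (Qbox I) z) z * ennreal (v z) * indicator (Qbox I) z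
      \<le> S z * ennreal (v z) * indicator (Qbox I) z" for z
    using dyadic_max_le_SUP_subboxes[OF _ _ grid I U, of z]
    by (cases "z \<in> Qbox I") (auto simp: S_def intro: mult_right_mono)
  then have "areaint (Qbox I) (\<lambda>z. dyadic_max D v (\<lambda>z. u z * indicator (Qbox I) z) z * ennreal (v z))
      \<le> areaint (Qbox I) (\<lambda>z. S z * ennreal (v z))"
    unfolding areaint_def by (rule mult_left_mono[OF nn_integral_mono]) auto
  also have "\<dots> = (\<integral>\<^sup>+z. S z \<partial>weighted_area v (Qbox I))"
    by (simp add: nn_integral_weighted_area \<open>S \<in> borel_measurable lebesgue\<close>)
  also have "\<dots> \<le> ennreal ((1-s)/(2*\<eta>)) * ennreal (2/\<epsilon>) * areaint (Qbox I) (\<lambda>z. ennreal (\<bar>u z\<bar> * v z))"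
    unfolding S_def using grid I reverse_Hoelder s C \<epsilon> \<eta> \<epsilon>C \<eta>C V
    by (intro nn_integral_SUP_subboxes_le) auto
  finally show ?thesis .
qed

lemma wavg_dyadic_max_le:
  fixes u v :: "complex \<Rightarrow> real" and C s \<epsilon> \<eta> :: real
  assumes [measurable]: "u \<in> borel_measurable lebesgue" "v \<in> borel_measurable lebesgue"
    and grid: "dyadic_grid D" and I: "I \<in> D"
    and reverse_Hoelder: "\<forall>J\<in>D. avgp 1 v (Qbox J) u \<le> ennreal C * avgp s v (Qbox J) u"
    and s: "0 < s" "s < 1" and C: "0 < C" and \<epsilon>: "0 < \<epsilon>" and \<eta>: "0 < \<eta>"
    and \<epsilon>C: "\<epsilon> powr s = 1/(4 * C powr s)" and \<eta>C: "\<eta> powr (1-s) = 1/(4 * C powr s)"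
  shows "wavg v (Qbox I) (dyadic_max D v (\<lambda>z. u z * indicator (Qbox I) z))
    \<le> ennreal ((1-s)/(2*\<eta>)) * ennreal (2/\<epsilon>) * avgp 1 v (Qbox I) u"
proof -
  define c where "c = ennreal ((1-s)/(2*\<eta>)) * ennreal (2/\<epsilon>)"
  define X where "X = areaint (Qbox I) (\<lambda>z. dyadic_max D v (\<lambda>z. u z * indicator (Qbox I) z) z * ennreal (v z))"
  define U V where "U = areaint (Qbox I) (\<lambda>z. ennreal (\<bar>u z\<bar> * v z))"
    and "V = areaint (Qbox I) (\<lambda>z. ennreal (v z))"
  have wavg: "wavg v (Qbox I) (dyadic_max D v (\<lambda>z. u z * indicator (Qbox I) z)) = X / V"
    unfolding wavg_def X_def V_def ..
  have avg: "avgp 1 v (Qbox I) u = U / V" unfolding U_def V_def by (rule avgp_1)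
  consider "V = \<infinity>" | "V \<noteq> \<infinity>" "U = \<infinity>" | "V \<noteq> \<infinity>" "U \<noteq> \<infinity>" by blast
  then show ?thesis
  proof cases
    case 1
    then show ?thesis unfolding wavg by simp
  next
    case 2
    have "c \<noteq> 0" using s \<epsilon> \<eta> by (simp add: c_def)
    then show ?thesis
      using 2 unfolding c_def[symmetric] avg by (simp add: ennreal_top_divide ennreal_mult_top)
  next
    case 3
    then have "X \<le> c * U"
      unfolding X_def c_def U_def using grid I reverse_Hoelder s C \<epsilon> \<eta> \<epsilon>C \<eta>C
      by (intro areaint_dyadic_max_le) (auto simp: V_def less_top)
    then have "X / V \<le> c * U / V"
      by (rule divide_right_mono_ennreal)
    then show ?thesis
      unfolding wavg c_def[symmetric] avg by (simp add: ennreal_times_divide)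
  qed
qed

theorem proposition3p3:
  fixes u v :: "complex \<Rightarrow> real" and D :: "arc set" and C s :: real
  assumes "weight u" and "weight v" and "dyadic_grid D"
    and "C > 0" and "0 < s" and "s < 1"
    and "\<forall>I\<in>D. avgp 1 v (Qbox I) u \<le> ennreal C * avgp s v (Qbox I) u"
  shows "in_Binf u D v"
proof -
  have [measurable]: "u \<in> borel_measurable lebesgue" "v \<in> borel_measurable lebesgue"
    using assms(1,2) by (simp_all add: weight_def)
  define \<epsilon> \<eta> where "\<epsilon> = (1/(4 * C powr s)) powr (1/s)" and "\<eta> = (1/(4 * C powr s)) powr (1/(1-s))"
  have \<epsilon>: "0 < \<epsilon>" "\<epsilon> powr s = 1/(4 * C powr s)" and \<eta>: "0 < \<eta>" "\<eta> powr (1-s) = 1/(4 * C powr s)"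
    using assms(4-6) by (simp_all add: \<epsilon>_def \<eta>_def powr_powr)
  define c where "c = ennreal ((1-s)/(2*\<eta>)) * ennreal (2/\<epsilon>)"
  have "c < \<infinity>" by (simp add: c_def ennreal_mult_less_top)
  have "Binf_const D v u \<le> c"
    unfolding Binf_const_def
  proof (rule SUP_least)
    fix I assume "I \<in> D"
    then have "wavg v (Qbox I) (dyadic_max D v (\<lambda>z. u z * indicator (Qbox I) z)) \<le> c * avgp 1 v (Qbox I) u"
      unfolding c_def using assms(3-7) \<epsilon> \<eta> by (intro wavg_dyadic_max_le) auto
    then show "wavg v (Qbox I) (dyadic_max D v (\<lambda>z. u z * indicator (Qbox I) z)) / avgp 1 v (Qbox I) u \<le> c"
      using \<open>c < \<infinity>\<close> by (rule ennreal_divide_le_of_le_mult)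
  qed
  then show ?thesis unfolding in_Binf_def using \<open>c < \<infinity>\<close> by (rule le_less_trans)
qed

end
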